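(* Let $0<c_1\le 0.2$ and suppose $t\le c_1 n$. Then for all sufficiently large $n$ and all $k\ge 0$, with $L=\sum_{i=1}^x (a_i-t_i)\, d_i\, e^{d_i k/n}$, we have $\frac{L}{n-d_{\max}}\ge 1$.
   Context: Setting: $n$ vertices, a target set $B$ with $|B|=t$, each vertex $v$ has out-degree $d_v$ with $2\le d_{\min}\le d_v\le d_{\max}$ (constants). $d_1,\dots,d_x$ are the distinct out-degrees, $a_i$ is the number of vertices of out-degree $d_i$ (so $\sum_i a_i=n$), and $t_i$ the number of vertices of $B$ of out-degree $d_i$ (so $\sum_i t_i = t$). *)

theory Defs
  imports Complex_Main
begin

text \<open>Vertices are 0..n-1, deg v is the out-degree of v, B is the target set.
  The distinct out-degrees d_i are the elements of deg ` {..<n};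
  a_i = number of vertices of degree d_i, t_i = number of vertices of B of degree d_i.
  Lsum n deg B k = sum over i of (a_i - t_i) * d_i * exp(d_i k / n).\<close>

definition deg_count :: "nat set \<Rightarrow> (nat \<Rightarrow> nat) \<Rightarrow> nat \<Rightarrow> nat" where
  "deg_count S deg d = card {v \<in> S. deg v = d}"

definition Lsum :: "nat \<Rightarrow> (nat \<Rightarrow> nat) \<Rightarrow> nat set \<Rightarrow> real \<Rightarrow> real" where
  "Lsum n deg B k =
     (\<Sum>d \<in> deg ` {..<n}.
        (real (deg_count {..<n} deg d) - real (deg_count B deg d)) * real d
          * exp (real d * k / real n))"

end

theory Submission
  imports Defs
begin

text \<open>Since \<open>k \<ge> 0\<close>, every exponential factor is at least 1 and every degree at least
  \<open>d\<^sub>m\<^sub>i\<^sub>n \<ge> 2\<close>, so \<open>L \<ge> 2 \<Sum>\<^sub>i (a\<^sub>i - t\<^sub>i) = 2 (n - t) \<ge> 1.6 n \<ge> n - d\<^sub>m\<^sub>a\<^sub>x\<close>.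
  Hence the bound holds as soon as \<open>n > d\<^sub>m\<^sub>a\<^sub>x\<close>.\<close>

lemma sum_deg_count:
  assumes "finite S" "finite T" "deg ` S \<subseteq> T"
  shows "(\<Sum>d\<in>T. real (deg_count S deg d)) = real (card S)"
proof -
  have "(\<Sum>d\<in>T. \<Sum>v\<in>{v\<in>S. deg v = d}. (1::real)) = (\<Sum>v\<in>S. 1)"
    using sum.group[OF assms, of "\<lambda>_. 1::real"] by simp
  then show ?thesis unfolding deg_count_def by simp
qed

lemma deg_count_mono: "finite T \<Longrightarrow> S \<subseteq> T \<Longrightarrow> deg_count S deg d \<le> deg_count T deg d"
  unfolding deg_count_def by (rule card_mono) auto

lemma Lsum_lower_bound:
  assumes B: "B \<subseteq> {..<n}" and deg: "\<And>v. v < n \<Longrightarrow> d0 \<le> deg v" and k: "0 \<le> k"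
  shows "real d0 * (real n - real (card B)) \<le> Lsum n deg B k"
proof -
  let ?D = "deg ` {..<n}"
  let ?c = "\<lambda>d. real (deg_count {..<n} deg d) - real (deg_count B deg d)"
  have term_bound: "?c d * real d0 \<le> ?c d * real d * exp (real d * k / real n)"
    if "d \<in> ?D" for d
  proof -
    have "0 \<le> ?c d" using deg_count_mono[OF _ B] by simp
    moreover have "real d0 \<le> real d * exp (real d * k / real n)"
      using mult_mono[of "real d0" "real d" 1 "exp (real d * k / real n)"] that deg k by force
    ultimately show ?thesis by (simp add: mult_left_mono mult.assoc)
  qed
  have "finite B" using B finite_subset by blast
  have "(\<Sum>d\<in>?D. ?c d) = real n - real (card B)"
    using sum_deg_count[OF \<open>finite B\<close>, of ?D deg] sum_deg_count[of "{..<n}" ?D deg] B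
    by (auto simp: sum_subtractf)
  then have "real d0 * (real n - real (card B)) = (\<Sum>d\<in>?D. ?c d * real d0)"
    by (metis sum_distrib_right mult.commute)
  also have "\<dots> \<le> Lsum n deg B k"
    unfolding Lsum_def by (rule sum_mono[OF term_bound])
  finally show ?thesis .
qed

theorem lemma7:
  fixes c1 :: real and dmin dmax :: nat
  assumes "0 < c1" and "c1 \<le> 0.2" and "2 \<le> dmin" and "dmin \<le> dmax"
  shows "\<exists>N::nat. \<forall>n\<ge>N. \<forall>(deg :: nat \<Rightarrow> nat) (B :: nat set).
           B \<subseteq> {..<n} \<and> (\<forall>v<n. dmin \<le> deg v \<and> deg v \<le> dmax)
           \<and> real (card B) \<le> c1 * real n \<longrightarrow>
           (\<forall>k::real. k \<ge> 0 \<longrightarrow> Lsum n deg B k / (real n - real dmax) \<ge> 1)"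
proof (intro exI[of _ "dmax + 1"] allI impI)
  fix n deg B and k :: real
  assume n: "dmax + 1 \<le> n"
    and H: "B \<subseteq> {..<n} \<and> (\<forall>v<n. dmin \<le> deg v \<and> deg v \<le> dmax) \<and> real (card B) \<le> c1 * real n"
    and k: "0 \<le> k"
  have "real dmin * (real n - real (card B)) \<le> Lsum n deg B k"
    using H k by (intro Lsum_lower_bound) auto
  moreover have "card B \<le> n"
    using H card_mono[of "{..<n}" B] by simp
  then have "2 * (real n - real (card B)) \<le> real dmin * (real n - real (card B))"
    using assms(3) by (intro mult_right_mono) auto
  moreover have "c1 * real n \<le> 0.2 * real n"
    using assms(2) by (intro mult_right_mono) auto
  moreover have "real (card B) \<le> c1 * real n" using H by blast
  ultimately have "real n - real dmax \<le> Lsum n deg B k"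
    by (simp add: field_simps)
  moreover have "0 < real n - real dmax" using n by simp
  ultimately show "1 \<le> Lsum n deg B k / (real n - real dmax)" by simp
qed

end
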